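(* Let $C\le A$ be groups. An element $a\in A\setminus C$ is $2$-RF rel $C$ if and only if $aCa^{-1}\cap C=\{\mathrm{id}\}$. Consequently $(A,C)$ is $2$-RF if and only if $C$ is malnormal in $A$; in particular, if $(A,C)$ is $n$-RF for some $2\le n\le\infty$, then $C$ is malnormal in $A$.
   Context: For a group $G$, subgroup $D$, and $2\le n\le\infty$: $a\in G\setminus D$ is $n$-RF rel $D$ if $a^{e_1}d_1\cdots a^{e_k}d_k\ne\mathrm{id}$ for all $k\ge1$, $e_i\in\{\pm1\}$, $d_i\in D$ such that $d_i\ne\mathrm{id}$ whenever $e_i=-e_{i+1}$ (indices mod $k$), and fewer than $n$ of the $e_i$ are $+1$ and fewer than $n$ are $-1$. The pair $(G,D)$ is $n$-RF if every element of $G\setminus D$ is $n$-RF rel $D$. $C$ is malnormal in $A$ if $aCa^{-1}\cap C=\{\mathrm{id}\}$ for all $a\in A\setminus C$. *)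

theory Defs
  imports "HOL-Algebra.Group" "HOL-Library.Extended_Nat"
begin

text \<open>A word a^{e_1} d_1 ... a^{e_k} d_k is encoded as a list of pairs (e_i, d_i),
  where e_i = True means exponent +1 and e_i = False means exponent -1.\<close>

definition word_prod :: "('a, 'b) monoid_scheme \<Rightarrow> 'a \<Rightarrow> (bool \<times> 'a) list \<Rightarrow> 'a" where
  "word_prod G a ws =
     foldr (\<lambda>(e, d) acc. (if e then a else inv\<^bsub>G\<^esub> a) \<otimes>\<^bsub>G\<^esub> d \<otimes>\<^bsub>G\<^esub> acc) ws \<one>\<^bsub>G\<^esub>"

definition admissible_word ::
    "('a, 'b) monoid_scheme \<Rightarrow> 'a set \<Rightarrow> enat \<Rightarrow> (bool \<times> 'a) list \<Rightarrow> bool" where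
  "admissible_word G D n ws \<longleftrightarrow>
     ws \<noteq> [] \<and>
     (\<forall>i < length ws. snd (ws ! i) \<in> D) \<and>
     (\<forall>i < length ws. fst (ws ! i) \<noteq> fst (ws ! ((i + 1) mod length ws))
                        \<longrightarrow> snd (ws ! i) \<noteq> \<one>\<^bsub>G\<^esub>) \<and>
     enat (length (filter fst ws)) < n \<and>
     enat (length (filter (\<lambda>w. \<not> fst w) ws)) < n"

definition RF_rel :: "('a, 'b) monoid_scheme \<Rightarrow> 'a set \<Rightarrow> enat \<Rightarrow> 'a \<Rightarrow> bool" where
  "RF_rel G D n a \<longleftrightarrow>
     a \<in> carrier G - D \<and>
     (\<forall>ws. admissible_word G D n ws \<longrightarrow> word_prod G a ws \<noteq> \<one>\<^bsub>G\<^esub>)"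

definition RF_pair :: "('a, 'b) monoid_scheme \<Rightarrow> 'a set \<Rightarrow> enat \<Rightarrow> bool" where
  "RF_pair G D n \<longleftrightarrow> (\<forall>a \<in> carrier G - D. RF_rel G D n a)"

definition malnormal :: "('a, 'b) monoid_scheme \<Rightarrow> 'a set \<Rightarrow> bool" where
  "malnormal G C \<longleftrightarrow>
     (\<forall>a \<in> carrier G - C.
        {a \<otimes>\<^bsub>G\<^esub> c \<otimes>\<^bsub>G\<^esub> inv\<^bsub>G\<^esub> a | c. c \<in> C} \<inter> C = {\<one>\<^bsub>G\<^esub>})"

end

theory Submission
  imports Defs
begin

text \<open>With fewer than two letters of each sign, an admissible word is either a single
  letter a d or a\<inverse> d, whose product 1 would put a into C, or a cyclically reduced pair
  a d a\<inverse> d' or a\<inverse> d a d' with d, d' nontrivial; the latter products are 1 exactly when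
  a conjugates the nontrivial element d, resp. d', to an element of C.\<close>

lemma admissible_word_mono:
  assumes "n \<le> m" and "admissible_word G D n ws"
  shows "admissible_word G D m ws"
  using assms unfolding admissible_word_def by (meson order_less_le_trans)

lemma RF_pair_mono:
  assumes "n \<le> m" and "RF_pair G D m"
  shows "RF_pair G D n"
  using assms admissible_word_mono unfolding RF_pair_def RF_rel_def by blast

lemma length_filter_fst_not_fst:
  "length (filter fst ws) + length (filter (\<lambda>w. \<not> fst w) ws) = length ws"
  by (induction ws) auto

lemma admissible_word_two_iff:
  "admissible_word G D 2 ws \<longleftrightarrow>
     (\<exists>e d. ws = [(e, d)] \<and> d \<in> D) \<or>
     (\<exists>e d d'. ws = [(e, d), (\<not> e, d')] \<and> d \<in> D - {\<one>\<^bsub>G\<^esub>} \<and> d' \<in> D - {\<one>\<^bsub>G\<^esub>})"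
  (is "?adm \<longleftrightarrow> ?single \<or> ?pair")
proof
  assume adm: ?adm
  have pos: "length (filter fst ws) < 2" and neg: "length (filter (\<lambda>w. \<not> fst w) ws) < 2"
    using adm by (simp_all add: admissible_word_def numeral_eq_enat)
  then have "length ws \<le> 2"
    using length_filter_fst_not_fst[of ws] by linarith
  with adm consider w where "ws = [w]" | w w' where "ws = [w, w']"
    unfolding admissible_word_def
    by (metis One_nat_def Suc_1 le_Suc_eq le_zero_eq length_0_conv length_Suc_conv)
  then show "?single \<or> ?pair"
  proof cases
    case 1
    then show ?thesis using adm by (cases w) (auto simp: admissible_word_def)
  next
    case 2
    obtain e d e' d' where ws: "ws = [(e, d), (e', d')]"
      using 2 by (cases w, cases w') auto
    have "e' = (\<not> e)"
      using pos neg ws by (cases e; cases e') auto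
    have in_D: "\<forall>i < length ws. snd (ws ! i) \<in> D"
      and alternating: "\<forall>i < length ws. fst (ws ! i) \<noteq> fst (ws ! ((i + 1) mod length ws))
                          \<longrightarrow> snd (ws ! i) \<noteq> \<one>\<^bsub>G\<^esub>"
      using adm unfolding admissible_word_def by blast+
    have "d \<in> D" "d' \<in> D"
      using in_D[rule_format, of 0] in_D[rule_format, of 1] ws by simp_all
    moreover have "d \<noteq> \<one>\<^bsub>G\<^esub>" "d' \<noteq> \<one>\<^bsub>G\<^esub>"
      using alternating[rule_format, of 0] alternating[rule_format, of 1] ws \<open>e' = (\<not> e)\<close>
      by simp_all
    ultimately show ?thesis
      using ws \<open>e' = (\<not> e)\<close> by blast
  qed
next
  assume "?single \<or> ?pair"
  then show ?adm
    by (auto simp: admissible_word_def numeral_eq_enat less_Suc_eq)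
qed

context group
begin

lemma mult_eq_one_iff_eq_inv:
  assumes "x \<in> carrier G" and "y \<in> carrier G"
  shows "x \<otimes> y = \<one> \<longleftrightarrow> x = inv y"
  using assms by (auto intro: inv_equality[symmetric])

lemma word_prod_single_eq_one_iff:
  assumes "a \<in> carrier G" and "d \<in> carrier G"
  shows "word_prod G a [(e, d)] = \<one> \<longleftrightarrow> a = (if e then inv d else d)"
  using assms by (auto simp: word_prod_def mult_eq_one_iff_eq_inv) (metis inv_inv)

lemma word_prod_pos_neg_eq_one_iff:
  assumes "a \<in> carrier G" and "d \<in> carrier G" and "d' \<in> carrier G"
  shows "word_prod G a [(True, d), (False, d')] = \<one> \<longleftrightarrow> a \<otimes> d \<otimes> inv a = inv d'"
proof -
  have "word_prod G a [(True, d), (False, d')] = a \<otimes> d \<otimes> inv a \<otimes> d'"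
    using assms by (simp add: word_prod_def m_assoc)
  then show ?thesis
    using assms by (simp add: mult_eq_one_iff_eq_inv)
qed

lemma word_prod_neg_pos_eq_one_iff:
  assumes "a \<in> carrier G" and "d \<in> carrier G" and "d' \<in> carrier G"
  shows "word_prod G a [(False, d), (True, d')] = \<one> \<longleftrightarrow> a \<otimes> d' \<otimes> inv a = inv d"
proof -
  have "word_prod G a [(False, d), (True, d')] = \<one> \<longleftrightarrow> (inv a \<otimes> d) \<otimes> (a \<otimes> d') = \<one>"
    using assms by (simp add: word_prod_def m_assoc)
  also have "\<dots> \<longleftrightarrow> (a \<otimes> d') \<otimes> (inv a \<otimes> d) = \<one>"
    using assms by (blast intro: inv_comm)
  also have "\<dots> \<longleftrightarrow> (a \<otimes> d' \<otimes> inv a) \<otimes> d = \<one>"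
    using assms by (simp add: m_assoc)
  also have "\<dots> \<longleftrightarrow> a \<otimes> d' \<otimes> inv a = inv d"
    using assms by (simp add: mult_eq_one_iff_eq_inv)
  finally show ?thesis .
qed

lemma conj_eq_one_iff:
  assumes "a \<in> carrier G" and "c \<in> carrier G"
  shows "a \<otimes> c \<otimes> inv a = \<one> \<longleftrightarrow> c = \<one>"
  using assms by (simp add: inv_solve_right')

lemma RF_rel_two_iff:
  assumes C: "subgroup C G" and a: "a \<in> carrier G - C"
  shows "RF_rel G C 2 a \<longleftrightarrow> (\<forall>c \<in> C - {\<one>}. a \<otimes> c \<otimes> inv a \<notin> C)"
proof
  assume RF: "RF_rel G C 2 a"
  show "\<forall>c \<in> C - {\<one>}. a \<otimes> c \<otimes> inv a \<notin> C"
  proof (intro ballI notI)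
    fix c assume c: "c \<in> C - {\<one>}" and conj_in_C: "a \<otimes> c \<otimes> inv a \<in> C"
    have c_carrier: "c \<in> carrier G"
      using c subgroup.subset[OF C] by blast
    let ?d' = "inv (a \<otimes> c \<otimes> inv a)"
    have "?d' \<in> C - {\<one>}"
      using c c_carrier a conj_in_C subgroup.m_inv_closed[OF C] by (simp add: conj_eq_one_iff)
    with c have "admissible_word G C 2 [(True, c), (False, ?d')]"
      unfolding admissible_word_two_iff by auto
    moreover have "word_prod G a [(True, c), (False, ?d')] = \<one>"
      using a c_carrier by (simp add: word_prod_pos_neg_eq_one_iff)
    ultimately show False
      using RF unfolding RF_rel_def by blast
  qed
next
  assume no_conj: "\<forall>c \<in> C - {\<one>}. a \<otimes> c \<otimes> inv a \<notin> C"
  have in_carrier: "x \<in> carrier G" if "x \<in> C" for x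
    using that subgroup.subset[OF C] by blast
  have inv_in_C: "inv x \<in> C" if "x \<in> C" for x
    using that subgroup.m_inv_closed[OF C] by blast
  show "RF_rel G C 2 a"
    unfolding RF_rel_def
  proof (intro conjI allI impI notI)
    fix ws assume "admissible_word G C 2 ws" and prod: "word_prod G a ws = \<one>"
    then consider e d where "ws = [(e, d)]" "d \<in> C"
      | d d' where "ws = [(True, d), (False, d')]" "d \<in> C - {\<one>}" "d' \<in> C - {\<one>}"
      | d d' where "ws = [(False, d), (True, d')]" "d \<in> C - {\<one>}" "d' \<in> C - {\<one>}"
      unfolding admissible_word_two_iff by blast
    then show False
    proof cases
      case (1 e d)
      then show False
        using prod a in_carrier inv_in_C by (auto simp: word_prod_single_eq_one_iff split: if_splits)
    next
      case (2 d d')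
      then have "a \<otimes> d \<otimes> inv a = inv d'"
        using prod a in_carrier by (simp add: word_prod_pos_neg_eq_one_iff)
      then have "a \<otimes> d \<otimes> inv a \<in> C"
        using 2 inv_in_C by simp
      with 2 no_conj show False by blast
    next
      case (3 d d')
      then have "a \<otimes> d' \<otimes> inv a = inv d"
        using prod a in_carrier by (simp add: word_prod_neg_pos_eq_one_iff)
      then have "a \<otimes> d' \<otimes> inv a \<in> C"
        using 3 inv_in_C by simp
      with 3 no_conj show False by blast
    qed
  qed (use a in blast)
qed

lemma conj_inter_eq_one_iff:
  assumes C: "subgroup C G" and a: "a \<in> carrier G"
  shows "{a \<otimes> c \<otimes> inv a | c. c \<in> C} \<inter> C = {\<one>} \<longleftrightarrow> (\<forall>c \<in> C - {\<one>}. a \<otimes> c \<otimes> inv a \<notin> C)"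
proof -
  have "a \<otimes> c \<otimes> inv a = \<one> \<longleftrightarrow> c = \<one>" if "c \<in> C" for c
    using that conj_eq_one_iff[OF a] subgroup.subset[OF C] by auto
  moreover have "\<one> \<in> C" and "\<one> = a \<otimes> \<one> \<otimes> inv a"
    using subgroup.one_closed[OF C] a by simp_all
  ultimately show ?thesis
    by blast
qed

end

theorem lemma5p22:
  fixes A :: "('a, 'b) monoid_scheme" and C :: "'a set"
  assumes "group A" and "subgroup C A"
  shows "(\<forall>a \<in> carrier A - C.
            RF_rel A C 2 a \<longleftrightarrow>
            {a \<otimes>\<^bsub>A\<^esub> c \<otimes>\<^bsub>A\<^esub> inv\<^bsub>A\<^esub> a | c. c \<in> C} \<inter> C = {\<one>\<^bsub>A\<^esub>})
       \<and> (RF_pair A C 2 \<longleftrightarrow> malnormal A C)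
       \<and> (\<forall>n::enat. 2 \<le> n \<longrightarrow> RF_pair A C n \<longrightarrow> malnormal A C)"
proof -
  have RF_rel_iff: "RF_rel A C 2 a \<longleftrightarrow>
      {a \<otimes>\<^bsub>A\<^esub> c \<otimes>\<^bsub>A\<^esub> inv\<^bsub>A\<^esub> a | c. c \<in> C} \<inter> C = {\<one>\<^bsub>A\<^esub>}"
    if "a \<in> carrier A - C" for a
    using that group.RF_rel_two_iff[OF assms] group.conj_inter_eq_one_iff[OF assms]
    by simp
  moreover have "RF_pair A C 2 \<longleftrightarrow> malnormal A C"
    unfolding RF_pair_def malnormal_def using RF_rel_iff by blast
  ultimately show ?thesis
    using RF_pair_mono[of 2 _ A C] by blast
qed

end
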